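(* There is an absolute constant $c_0>0$ such that the following holds for every $0<\beta<1$. Let $t$ be a $\beta$-balanced full binary tree with $n\ge2$ leaves whose nodes carry at most $\sigma\ge2$ different labels. Then the minimal dag of $t$ has at most $\frac{\alpha_\beta\cdot n}{\log_\sigma n}$ nodes, where $\alpha_\beta = c_0\big(1+\log_{1+\beta}(\beta^{-1})\big)$ depends only on $\beta$.
   Context: A full binary tree is a finite rooted ordered labelled tree in which every node has either $0$ or $2$ children. The leaf size of a node is the number of leaves of the subtree rooted at it. An inner node $v$ with children $v_1,v_2$ of leaf sizes $n_1,n_2$ is $\beta$-balanced if $n_1\ge\beta n_2$ and $n_2\ge\beta n_1$. The tree $t$ is $\beta$-balanced if for all inner nodes $u,v$ such that $v$ is a child of $u$, at least one of $u$, $v$ is $\beta$-balanced. The minimal dag of a tree has one node for each isomorphism class (as labelled ordered trees) of subtrees of the tree; its size is its number of nodes. *)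

theory Defs
  imports Complex_Main
begin

datatype 'a fbtree = Leaf 'a | Node 'a "'a fbtree" "'a fbtree"

fun leaves :: "'a fbtree \<Rightarrow> nat" where
  "leaves (Leaf _) = 1"
| "leaves (Node _ l r) = leaves l + leaves r"

fun is_inner :: "'a fbtree \<Rightarrow> bool" where
  "is_inner (Leaf _) = False"
| "is_inner (Node _ _ _) = True"

fun node_balanced :: "real \<Rightarrow> 'a fbtree \<Rightarrow> bool" where
  "node_balanced \<beta> (Leaf _) = False"
| "node_balanced \<beta> (Node _ l r) =
     (real (leaves l) \<ge> \<beta> * real (leaves r) \<and> real (leaves r) \<ge> \<beta> * real (leaves l))"

fun tree_balanced :: "real \<Rightarrow> 'a fbtree \<Rightarrow> bool" where
  "tree_balanced \<beta> (Leaf _) = True"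
| "tree_balanced \<beta> (Node a l r) =
     (tree_balanced \<beta> l \<and> tree_balanced \<beta> r \<and>
      (\<forall>c \<in> {l, r}. is_inner c \<longrightarrow> node_balanced \<beta> (Node a l r) \<or> node_balanced \<beta> c))"

fun subtrees :: "'a fbtree \<Rightarrow> 'a fbtree set" where
  "subtrees (Leaf a) = {Leaf a}"
| "subtrees (Node a l r) = insert (Node a l r) (subtrees l \<union> subtrees r)"

fun labels :: "'a fbtree \<Rightarrow> 'a set" where
  "labels (Leaf a) = {a}"
| "labels (Node a l r) = insert a (labels l \<union> labels r)"

text \<open>The minimal dag has one node per isomorphism class (= equality class) of subtrees.\<close>
definition dag_size :: "'a fbtree \<Rightarrow> nat" where
  "dag_size t = card (subtrees t)"

end

theory Submission
  imports Defs
begin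

(* The nodes of the minimal dag of t are the distinct subtrees of t.  Fix a
   threshold k and split them into light subtrees (fewer than k leaves) and
   heavy ones (at least k leaves).

   Light subtrees are few because they are short: a tree with fewer than k
   leaves is determined by its preorder word of length below 2k over the
   alphabet (label, is-leaf), so there are at most sigma^(4k) of them.

   Heavy subtrees are bounded by the number of heavy node positions of t.  For
   a beta-balanced tree this number is at most 12 (1 + log_(1+beta)(1/beta)) n/k:
   heavy nodes with two heavy children are fewer than n/k, and along a chain
   of heavy nodes with one light child the leaf count grows by a factor
   (1+beta) at every balanced step, so such a chain has length
   O(log_(1+beta)(1/beta)) between two "branching" events.  This is proved by
   structural induction with an explicit potential function heavy_budget.

   Choosing k of order log_sigma n balances the two counts; for small
   log_sigma n the trivial bound dag_size t <= 2n suffices.  This yields the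
   theorem with c0 = 200. *)


lemma leaves_pos: "1 \<le> leaves t"
  by (induction t) auto

lemma inner_if_two_leaves: "2 \<le> leaves t \<Longrightarrow> is_inner t"
  by (cases t) auto

lemma finite_labels: "finite (labels t)"
  by (induction t) auto

lemma labels_nonempty: "labels t \<noteq> {}"
  by (cases t) auto

lemma finite_subtrees: "finite (subtrees t)"
  by (induction t) auto

lemma card_subtrees_le: "card (subtrees t) \<le> 2 * leaves t - 1"
proof (induction t)
  case (Node a l r)
  have "card (subtrees (Node a l r)) \<le> 1 + card (subtrees l \<union> subtrees r)"
    by (simp add: card_insert_le_m1 card_insert_if finite_subtrees)
  also have "\<dots> \<le> 1 + card (subtrees l) + card (subtrees r)"
    using card_Un_le by simp
  finally show ?case
    using Node.IH leaves_pos[of l] leaves_pos[of r] by simp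
qed simp

lemma labels_subtree: "s \<in> subtrees t \<Longrightarrow> labels s \<subseteq> labels t"
  by (induction t) auto


section \<open>Counting trees with few leaves\<close>

text \<open>Preorder encoding: every node contributes its label and whether it is
  a leaf.  Since the encoding is prefix-free, it is injective.\<close>
fun preorder :: "'a fbtree \<Rightarrow> ('a \<times> bool) list" where
  "preorder (Leaf a) = [(a, True)]"
| "preorder (Node a l r) = (a, False) # preorder l @ preorder r"

lemma preorder_prefix_free:
  "preorder s @ xs = preorder t @ ys \<Longrightarrow> s = t \<and> xs = ys"
proof (induction s arbitrary: t xs ys)
  case (Leaf a)
  then show ?case by (cases t) simp_all
next
  case (Node a l r)
  obtain l' r' where t: "t = Node a l' r'"
    and rest: "preorder l @ (preorder r @ xs) = preorder l' @ (preorder r' @ ys)"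
    using Node.prems by (cases t) auto
  from Node.IH(1)[OF rest] have "l = l'" and "preorder r @ xs = preorder r' @ ys"
    by auto
  with Node.IH(2) t show ?case by blast
qed

lemma inj_preorder: "inj preorder"
  using preorder_prefix_free[where xs = "[]" and ys = "[]"] by (auto intro: injI)

lemma length_preorder: "length (preorder s) = 2 * leaves s - 1"
proof (induction s)
  case (Node a l r)
  then show ?case using leaves_pos[of l] leaves_pos[of r] by simp
qed simp

lemma set_preorder: "set (preorder s) \<subseteq> labels s \<times> UNIV"
  by (induction s) auto

lemma sum_powers_less: "(2::nat) \<le> b \<Longrightarrow> (\<Sum>i\<le>N. b ^ i) < b ^ Suc N"
proof (induction N)
  case (Suc N)
  have "(\<Sum>i\<le>Suc N. b ^ i) < b ^ Suc N + b ^ Suc N"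
    using Suc by simp
  also have "\<dots> \<le> b * b ^ Suc N"
    using Suc.prems by (simp add: mult_2[symmetric])
  finally show ?case by simp
qed simp

lemma preorder_few_leaves:
  "preorder ` {s. labels s \<subseteq> A \<and> leaves s \<le> k}
     \<subseteq> {xs. set xs \<subseteq> A \<times> UNIV \<and> length xs \<le> 2 * k - 1}"
proof
  fix xs assume "xs \<in> preorder ` {s. labels s \<subseteq> A \<and> leaves s \<le> k}"
  then obtain s where s: "labels s \<subseteq> A" "leaves s \<le> k" and xs: "xs = preorder s"
    by blast
  have "set xs \<subseteq> A \<times> UNIV" using set_preorder[of s] s(1) xs by blast
  moreover have "length xs \<le> 2 * k - 1" using length_preorder[of s] s(2) xs by simp
  ultimately show "xs \<in> {xs. set xs \<subseteq> A \<times> UNIV \<and> length xs \<le> 2 * k - 1}" by simp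
qed

lemma finite_trees_few_leaves:
  assumes "finite A"
  shows "finite {s. labels s \<subseteq> A \<and> leaves s \<le> k}"
proof -
  have "finite (A \<times> (UNIV :: bool set))" using assms by simp
  then have "finite {xs. set xs \<subseteq> A \<times> (UNIV :: bool set) \<and> length xs \<le> 2 * k - 1}"
    by (rule finite_lists_length_le)
  then have "finite (preorder ` {s. labels s \<subseteq> A \<and> leaves s \<le> k})"
    by (rule finite_subset[OF preorder_few_leaves])
  moreover have "inj_on preorder {s. labels s \<subseteq> A \<and> leaves s \<le> k}"
    by (rule inj_on_subset[OF inj_preorder subset_UNIV])
  ultimately show ?thesis by (rule finite_imageD)
qed

lemma card_trees_few_leaves:
  assumes "finite A" "A \<noteq> {}" "1 \<le> k"
  shows "card {s. labels s \<subseteq> A \<and> leaves s \<le> k} \<le> (2 * card A) ^ (2 * k)"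
proof -
  let ?B = "A \<times> (UNIV :: bool set)"
  let ?W = "{xs. set xs \<subseteq> ?B \<and> length xs \<le> 2 * k - 1}"
  have fin_B: "finite ?B" using assms(1) by simp
  have card_B: "card ?B = 2 * card A" by (simp add: card_cartesian_product)
  have "card {s. labels s \<subseteq> A \<and> leaves s \<le> k} \<le> card ?W"
  proof (rule card_inj_on_le)
    show "inj_on preorder {s. labels s \<subseteq> A \<and> leaves s \<le> k}"
      by (rule inj_on_subset[OF inj_preorder subset_UNIV])
    show "preorder ` {s. labels s \<subseteq> A \<and> leaves s \<le> k} \<subseteq> ?W"
      by (rule preorder_few_leaves)
    show "finite ?W" using finite_lists_length_le[OF fin_B] .
  qed
  also have "\<dots> = (\<Sum>i\<le>2 * k - 1. card ?B ^ i)"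
    using card_lists_length_le[OF fin_B] .
  also have "\<dots> < card ?B ^ Suc (2 * k - 1)"
    using card_B assms by (intro sum_powers_less) (simp add: Suc_le_eq card_gt_0_iff)
  also have "Suc (2 * k - 1) = 2 * k" using assms(3) by simp
  finally show ?thesis using card_B by simp
qed

lemma card_light_subtrees:
  assumes "card (labels t) \<le> \<sigma>" "2 \<le> \<sigma>" "1 \<le> k"
  shows "card {s \<in> subtrees t. leaves s < k} \<le> \<sigma> ^ (4 * k)"
proof -
  let ?T = "{s. labels s \<subseteq> labels t \<and> leaves s \<le> k}"
  have "finite ?T" using finite_trees_few_leaves[OF finite_labels] .
  moreover have "{s \<in> subtrees t. leaves s < k} \<subseteq> ?T"
    using labels_subtree by fastforce
  ultimately have "card {s \<in> subtrees t. leaves s < k} \<le> card ?T"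
    by (rule card_mono)
  also have "\<dots> \<le> (2 * card (labels t)) ^ (2 * k)"
    by (rule card_trees_few_leaves[OF finite_labels labels_nonempty assms(3)])
  also have "\<dots> \<le> (\<sigma> ^ 2) ^ (2 * k)"
  proof (rule power_mono)
    have "2 * card (labels t) \<le> 2 * \<sigma>" using assms(1) by simp
    also have "\<dots> \<le> \<sigma> * \<sigma>" using assms(2) by (rule mult_right_mono) simp
    finally show "2 * card (labels t) \<le> \<sigma> ^ 2" by (simp add: power2_eq_square)
  qed simp
  finally show ?thesis by (simp add: power_mult[symmetric] mult.assoc)
qed


section \<open>Heavy nodes\<close>

text \<open>The number of node positions of t whose subtree has at least k leaves.
  Distinct heavy subtrees occur at distinct such positions.\<close>
fun heavy_count :: "nat \<Rightarrow> 'a fbtree \<Rightarrow> nat" where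
  "heavy_count k (Leaf a) = (if k \<le> 1 then 1 else 0)"
| "heavy_count k (Node a l r) =
     (if k \<le> leaves l + leaves r then 1 else 0) + heavy_count k l + heavy_count k r"

lemma heavy_count_light: "leaves t < k \<Longrightarrow> heavy_count k t = 0"
  by (induction t) auto

lemma card_heavy_subtrees_le: "card {s \<in> subtrees t. k \<le> leaves s} \<le> heavy_count k t"
proof (induction t)
  case (Leaf a)
  have "{s \<in> subtrees (Leaf a). k \<le> leaves s} = (if k \<le> 1 then {Leaf a} else {})" by auto
  then show ?case by simp
next
  case (Node a l r)
  let ?H = "\<lambda>t. {s \<in> subtrees t. k \<le> leaves s}"
  let ?top = "if k \<le> leaves l + leaves r then {Node a l r} else {}"
  have split: "?H (Node a l r) = ?top \<union> (?H l \<union> ?H r)" by auto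
  have "card (?H (Node a l r)) \<le> card ?top + card (?H l \<union> ?H r)"
    unfolding split by (rule card_Un_le)
  also have "card (?H l \<union> ?H r) \<le> card (?H l) + card (?H r)"
    by (rule card_Un_le)
  finally have "card (?H (Node a l r)) \<le> card ?top + card (?H l) + card (?H r)"
    by simp
  moreover have "card ?top = (if k \<le> leaves l + leaves r then 1 else 0)" by simp
  ultimately show ?case using Node.IH by simp
qed


section \<open>A potential function for heavy nodes in balanced trees\<close>

definition balance_factor :: "real \<Rightarrow> real" where
  "balance_factor \<beta> = 1 + log (1 + \<beta>) (1 / \<beta>)"

text \<open>How many factors (1+beta) separate k from m, capped at the point
  k (1+beta)/beta beyond which a heavy node can no longer have a light sibling
  at a balanced parent.\<close>
definition chain_term :: "real \<Rightarrow> nat \<Rightarrow> nat \<Rightarrow> real" where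
  "chain_term \<beta> k m = log (1 + \<beta>) (min (real m) (real k * (1 + \<beta>) / \<beta>) / real k)"

text \<open>The budget for the heavy nodes of a subtree with m >= k leaves: a term
  linear in m/k pays for branching heavy nodes, the chain term pays for the
  current chain of heavy nodes with a light sibling.\<close>
definition heavy_budget :: "real \<Rightarrow> nat \<Rightarrow> nat \<Rightarrow> real" where
  "heavy_budget \<beta> k m =
     (3 + 2 * balance_factor \<beta>) * (2 * real m / real k - 1) + 2 * chain_term \<beta> k m"

lemma balance_factor_ge_1:
  assumes "0 < \<beta>" "\<beta> < 1"
  shows "1 \<le> balance_factor \<beta>"
proof -
  have "0 \<le> log (1 + \<beta>) (1 / \<beta>)" using assms by (subst zero_le_log_cancel_iff) auto
  then show ?thesis unfolding balance_factor_def by simp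
qed

lemma chain_term_nonneg:
  assumes "0 < \<beta>" "\<beta> < 1" "1 \<le> k" "k \<le> m"
  shows "0 \<le> chain_term \<beta> k m"
proof -
  have "real k * 1 \<le> real k * ((1 + \<beta>) / \<beta>)" using assms by (intro mult_left_mono) auto
  then have "1 \<le> min (real m) (real k * (1 + \<beta>) / \<beta>) / real k" using assms by simp
  then show ?thesis unfolding chain_term_def using assms by (subst zero_le_log_cancel_iff) auto
qed

lemma chain_term_mono:
  assumes "0 < \<beta>" "\<beta> < 1" "1 \<le> k" "k \<le> m" "m \<le> m'"
  shows "chain_term \<beta> k m \<le> chain_term \<beta> k m'"
proof -
  have "min (real m) (real k * (1 + \<beta>) / \<beta>) / real k
        \<le> min (real m') (real k * (1 + \<beta>) / \<beta>) / real k"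
    using assms by (intro divide_right_mono) auto
  then show ?thesis unfolding chain_term_def using assms by (subst log_le_cancel_iff) auto
qed

lemma chain_term_le_balance_factor:
  assumes "0 < \<beta>" "\<beta> < 1" "1 \<le> k" "k \<le> m"
  shows "chain_term \<beta> k m \<le> balance_factor \<beta>"
proof -
  have "min (real m) (real k * (1 + \<beta>) / \<beta>) / real k \<le> (real k * (1 + \<beta>) / \<beta>) / real k"
    using assms by (intro divide_right_mono) auto
  also have "\<dots> = (1 + \<beta>) * (1 / \<beta>)" using assms by simp
  finally have "chain_term \<beta> k m \<le> log (1 + \<beta>) ((1 + \<beta>) * (1 / \<beta>))"
    unfolding chain_term_def using assms by (subst log_le_cancel_iff) auto
  also have "\<dots> = balance_factor \<beta>"
    unfolding balance_factor_def using assms by (subst log_mult_pos) auto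
  finally show ?thesis .
qed

lemma chain_term_step:
  assumes "0 < \<beta>" "\<beta> < 1" "1 \<le> k" "k \<le> m1" "\<beta> * real m1 < real k"
    and grow: "(1 + \<beta>) * real m1 \<le> real m"
  shows "chain_term \<beta> k m1 + 1 \<le> chain_term \<beta> k m"
proof -
  define K where "K = real k * (1 + \<beta>) / \<beta>"
  have pos: "0 < real m1" "0 < real k" using assms by auto
  have "(1 + \<beta>) * real m1 < (1 + \<beta>) * (real k / \<beta>)"
    using assms by (intro mult_strict_left_mono) (auto simp: field_simps)
  then have below_cap: "(1 + \<beta>) * real m1 < K" unfolding K_def by (simp add: mult.commute)
  have "0 \<le> \<beta> * real m1" using assms by simp
  then have "real m1 \<le> (1 + \<beta>) * real m1" by (simp add: algebra_simps)
  then have "real m1 \<le> K" using below_cap by linarith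
  then have "chain_term \<beta> k m1 = log (1 + \<beta>) (real m1 / real k)"
    unfolding chain_term_def K_def[symmetric] by (simp add: min_absorb1)
  moreover have "log (1 + \<beta>) ((1 + \<beta>) * (real m1 / real k))
                 = log (1 + \<beta>) (1 + \<beta>) + log (1 + \<beta>) (real m1 / real k)"
    using assms pos by (intro log_mult_pos) auto
  moreover have "log (1 + \<beta>) (1 + \<beta>) = 1" using assms by simp
  ultimately have "chain_term \<beta> k m1 + 1 = log (1 + \<beta>) ((1 + \<beta>) * (real m1 / real k))"
    by simp
  also have "\<dots> \<le> log (1 + \<beta>) (min (real m) K / real k)"
  proof (rule log_mono)
    show "0 < (1 + \<beta>) * (real m1 / real k)" using assms pos by simp
    have "(1 + \<beta>) * real m1 \<le> min (real m) K" using below_cap grow by simp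
    then have "((1 + \<beta>) * real m1) / real k \<le> min (real m) K / real k"
      using pos by (intro divide_right_mono) auto
    then show "(1 + \<beta>) * (real m1 / real k) \<le> min (real m) K / real k" by simp
  qed (use assms in auto)
  also have "\<dots> = chain_term \<beta> k m" unfolding chain_term_def K_def ..
  finally show ?thesis .
qed

lemma heavy_budget_ge:
  assumes "0 < \<beta>" "\<beta> < 1" "1 \<le> k" "k \<le> m"
  shows "3 + 2 * balance_factor \<beta> \<le> heavy_budget \<beta> k m"
proof -
  have "1 \<le> 2 * real m / real k - 1" using assms by (simp add: field_simps)
  then have "(3 + 2 * balance_factor \<beta>) * 1
             \<le> (3 + 2 * balance_factor \<beta>) * (2 * real m / real k - 1)"
    using balance_factor_ge_1[OF assms(1,2)] by (intro mult_left_mono) auto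
  then show ?thesis unfolding heavy_budget_def using chain_term_nonneg[OF assms] by simp
qed

lemma heavy_budget_linear_mono:
  assumes "0 < \<beta>" "\<beta> < 1" "m \<le> m'"
  shows "(3 + 2 * balance_factor \<beta>) * (2 * real m / real k - 1)
         \<le> (3 + 2 * balance_factor \<beta>) * (2 * real m' / real k - 1)"
  using assms balance_factor_ge_1[OF assms(1,2)]
  by (intro mult_left_mono) (auto simp: divide_right_mono)

lemma heavy_budget_mono:
  assumes "0 < \<beta>" "\<beta> < 1" "1 \<le> k" "k \<le> m" "m \<le> m'"
  shows "heavy_budget \<beta> k m \<le> heavy_budget \<beta> k m'"
  using heavy_budget_linear_mono[OF assms(1,2,5), of k] chain_term_mono[OF assms]
  unfolding heavy_budget_def by linarith

lemma heavy_budget_branch: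
  assumes "0 < \<beta>" "\<beta> < 1" "1 \<le> k" "k \<le> m1" "k \<le> m2"
  shows "2 + heavy_budget \<beta> k m1 + heavy_budget \<beta> k m2 \<le> heavy_budget \<beta> k (m1 + m2)"
proof -
  have "chain_term \<beta> k m1 \<le> balance_factor \<beta>"
    using chain_term_le_balance_factor assms by blast
  moreover have "chain_term \<beta> k m2 \<le> chain_term \<beta> k (m1 + m2)"
    using chain_term_mono assms by simp
  moreover have "(3 + 2 * balance_factor \<beta>) * (2 * real (m1 + m2) / real k - 1) =
      (3 + 2 * balance_factor \<beta>) * (2 * real m1 / real k - 1)
      + (3 + 2 * balance_factor \<beta>) * (2 * real m2 / real k - 1) + (3 + 2 * balance_factor \<beta>)"
    using assms(3) by (simp add: field_simps)
  ultimately show ?thesis unfolding heavy_budget_def by linarith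
qed

lemma heavy_budget_step:
  assumes "0 < \<beta>" "\<beta> < 1" "1 \<le> k" "k \<le> m1" "\<beta> * real m1 < real k"
    and "(1 + \<beta>) * real m1 \<le> real m"
  shows "heavy_budget \<beta> k m1 + 2 \<le> heavy_budget \<beta> k m"
proof -
  have "real m1 \<le> (1 + \<beta>) * real m1" using assms by (simp add: algebra_simps)
  then have "m1 \<le> m" using assms(6) by linarith
  then show ?thesis
    using heavy_budget_linear_mono[OF assms(1,2), of m1 m k] chain_term_step[OF assms]
    unfolding heavy_budget_def by linarith
qed

text \<open>A heavy child c (with m1 leaves and c heavy nodes) next to a light
  sibling (m2 leaves): by balancedness the parent or the child is balanced;
  either the chain term grows or the child's spare unit pays for the parent.\<close>
lemma heavy_budget_heavy_light:
  assumes "0 < \<beta>" "\<beta> < 1" "1 \<le> k" "k \<le> m1" "m2 < k"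
    and child: "c \<le> heavy_budget \<beta> k m1" "child_bal \<longrightarrow> c + 1 \<le> heavy_budget \<beta> k m1"
    and bal: "(\<beta> * real m2 \<le> real m1 \<and> \<beta> * real m1 \<le> real m2) \<or> child_bal"
  shows "1 + c \<le> heavy_budget \<beta> k (m1 + m2) \<and>
    (\<beta> * real m2 \<le> real m1 \<and> \<beta> * real m1 \<le> real m2 \<longrightarrow> 1 + c + 1 \<le> heavy_budget \<beta> k (m1 + m2))"
proof (cases "\<beta> * real m1 \<le> real m2")
  case True
  then have "(1 + \<beta>) * real m1 \<le> real (m1 + m2)" by (simp add: algebra_simps)
  moreover have "\<beta> * real m1 < real k" using True assms(5) by linarith
  ultimately have "heavy_budget \<beta> k m1 + 2 \<le> heavy_budget \<beta> k (m1 + m2)"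
    using heavy_budget_step[OF assms(1-4)] by simp
  then show ?thesis using child(1) by simp
next
  case False
  then have "c + 1 \<le> heavy_budget \<beta> k m1" using bal child(2) by auto
  moreover have "heavy_budget \<beta> k m1 \<le> heavy_budget \<beta> k (m1 + m2)"
    using heavy_budget_mono[OF assms(1-4)] by simp
  ultimately show ?thesis using False by simp
qed

lemma heavy_count_le_budget:
  assumes "0 < \<beta>" "\<beta> < 1" "1 \<le> k"
  shows "tree_balanced \<beta> t \<Longrightarrow> k \<le> leaves t \<Longrightarrow>
    real (heavy_count k t) \<le> heavy_budget \<beta> k (leaves t) \<and>
    (node_balanced \<beta> t \<longrightarrow> real (heavy_count k t) + 1 \<le> heavy_budget \<beta> k (leaves t))"
proof (induction t)
  case (Leaf a)
  then have "k = 1" using assms(3) by simp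
  then show ?case
    using heavy_budget_ge[OF assms, of 1] balance_factor_ge_1[OF assms(1,2)] by simp
next
  case (Node a l r)
  let ?t = "Node a l r"
  have IH: "real (heavy_count k c) \<le> heavy_budget \<beta> k (leaves c) \<and>
      (node_balanced \<beta> c \<longrightarrow> real (heavy_count k c) + 1 \<le> heavy_budget \<beta> k (leaves c))"
    if "c \<in> {l, r}" "k \<le> leaves c" for c
    using Node that by auto
  have count: "heavy_count k ?t = 1 + heavy_count k l + heavy_count k r"
    using Node.prems(2) by simp
  have heavy_light: ?case
    if cd: "(c, d) = (l, r) \<or> (c, d) = (r, l)" and heavy: "k \<le> leaves c" and light: "leaves d < k"
    for c d
  proof -
    have "2 \<le> leaves c" using heavy light leaves_pos[of d] by simp
    then have "node_balanced \<beta> ?t \<or> node_balanced \<beta> c"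
      using Node.prems(1) cd inner_if_two_leaves by auto
    moreover have "node_balanced \<beta> ?t \<longleftrightarrow>
        \<beta> * real (leaves d) \<le> real (leaves c) \<and> \<beta> * real (leaves c) \<le> real (leaves d)"
      using cd by auto
    ultimately have
      "1 + real (heavy_count k c) \<le> heavy_budget \<beta> k (leaves c + leaves d) \<and>
       (node_balanced \<beta> ?t \<longrightarrow> 1 + real (heavy_count k c) + 1 \<le> heavy_budget \<beta> k (leaves c + leaves d))"
      using heavy_budget_heavy_light[OF assms heavy light] IH[of c] heavy cd by auto
    moreover have "heavy_count k ?t = 1 + heavy_count k c"
      using count heavy_count_light[OF light] cd by auto
    moreover have "leaves ?t = leaves c + leaves d" using cd by auto
    ultimately show ?thesis by simp
  qed
  consider "k \<le> leaves l" "k \<le> leaves r" | "leaves l < k" "leaves r < k"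
    | "k \<le> leaves l" "leaves r < k" | "leaves l < k" "k \<le> leaves r"
    by linarith
  then show ?case
  proof cases
    case 1
    then show ?thesis
      using IH[of l] IH[of r] heavy_budget_branch[OF assms 1] count by simp
  next
    case 2
    then show ?thesis
      using count heavy_count_light[OF 2(1)] heavy_count_light[OF 2(2)]
        heavy_budget_ge[OF assms Node.prems(2)]
        balance_factor_ge_1[OF assms(1,2)] by simp
  next
    case 3
    then show ?thesis using heavy_light[of l r] by simp
  next
    case 4
    then show ?thesis using heavy_light[of r l] by simp
  qed
qed

lemma heavy_budget_le:
  assumes "0 < \<beta>" "\<beta> < 1" "1 \<le> k" "k \<le> m"
  shows "heavy_budget \<beta> k m \<le> 12 * balance_factor \<beta> * real m / real k"
proof -
  let ?L = "balance_factor \<beta>" and ?q = "real m / real k"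
  have L: "1 \<le> ?L" using balance_factor_ge_1 assms by blast
  have q: "1 \<le> ?q" using assms by simp
  have "heavy_budget \<beta> k m \<le> (3 + 2 * ?L) * (2 * ?q) + 2 * ?L"
    unfolding heavy_budget_def using chain_term_le_balance_factor[OF assms] L
    by (simp add: algebra_simps)
  also have "\<dots> \<le> (5 * ?L) * (2 * ?q) + 2 * ?L * ?q"
  proof (rule add_mono)
    show "(3 + 2 * ?L) * (2 * ?q) \<le> (5 * ?L) * (2 * ?q)"
      using L q by (intro mult_right_mono) auto
    have "2 * ?L * 1 \<le> 2 * ?L * ?q" using L q by (intro mult_left_mono) auto
    then show "2 * ?L \<le> 2 * ?L * ?q" by simp
  qed
  also have "\<dots> = 12 * ?L * real m / real k" by (simp add: field_simps)
  finally show ?thesis .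
qed


section \<open>The compression bound\<close>

lemma dag_size_threshold:
  assumes "0 < \<beta>" "\<beta> < 1" "tree_balanced \<beta> t" "card (labels t) \<le> \<sigma>" "2 \<le> \<sigma>"
    and "1 \<le> k" "k \<le> leaves t"
  shows "real (dag_size t) \<le> real \<sigma> ^ (4 * k) + 12 * balance_factor \<beta> * real (leaves t) / real k"
proof -
  let ?S = "{s \<in> subtrees t. leaves s < k}" and ?H = "{s \<in> subtrees t. k \<le> leaves s}"
  have split: "subtrees t = ?S \<union> ?H" by auto
  have "dag_size t \<le> card ?S + card ?H"
    unfolding dag_size_def by (subst split) (rule card_Un_le)
  then have "real (dag_size t) \<le> real (card ?S) + real (card ?H)" by linarith
  moreover have "real (card ?S) \<le> real \<sigma> ^ (4 * k)"
    using of_nat_mono[OF card_light_subtrees[OF assms(4-6)]] by (simp only: of_nat_power)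
  moreover have "real (card ?H) \<le> 12 * balance_factor \<beta> * real (leaves t) / real k"
  proof -
    have "real (card ?H) \<le> real (heavy_count k t)"
      using card_heavy_subtrees_le by (rule of_nat_mono)
    also have "\<dots> \<le> heavy_budget \<beta> k (leaves t)"
      using heavy_count_le_budget[OF assms(1,2,6,3,7)] by (rule conjunct1)
    also have "\<dots> \<le> 12 * balance_factor \<beta> * real (leaves t) / real k"
      using heavy_budget_le[OF assms(1,2,6,7)] .
    finally show ?thesis .
  qed
  ultimately show ?thesis by linarith
qed

lemma ln_2_ge_half: "1 / 2 \<le> ln (2 :: real)"
proof -
  have "ln (1 / 2 :: real) \<le> 1 / 2 - 1" by (rule ln_le_minus_one) simp
  then show ?thesis by (simp add: ln_div)
qed

lemma log_le_4_sqrt: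
  fixes b x :: real
  assumes "2 \<le> b" "1 \<le> x"
  shows "log b x \<le> 4 * sqrt x"
proof -
  have "ln (sqrt x) \<le> sqrt x - 1" using assms by (intro ln_le_minus_one) simp
  then have ln_x: "ln x \<le> 2 * sqrt x" using assms ln_sqrt[of x] by simp
  have "ln 2 \<le> ln b" using assms(1) by simp
  then have "1 / 2 \<le> ln b" using ln_2_ge_half by linarith
  then have "log b x \<le> ln x / (1 / 2)"
    unfolding log_def using assms by (intro divide_left_mono) auto
  then show ?thesis using ln_x by simp
qed

text \<open>With 8k <= log_sigma n the light subtrees number at most sqrt n,
  which is O(n / log_sigma n).\<close>
lemma power_le_linear_over_log:
  assumes "2 \<le> \<sigma>" "2 \<le> n" "8 * real k \<le> log (real \<sigma>) (real n)"
  shows "real \<sigma> ^ (4 * k) \<le> 4 * real n / log (real \<sigma>) (real n)"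
proof -
  let ?lam = "log (real \<sigma>) (real n)"
  have pos: "0 < ?lam" using assms by simp
  have "real \<sigma> ^ (4 * k) = real \<sigma> powr real (4 * k)"
    using powr_realpow[of "real \<sigma>" "4 * k"] assms(1) by simp
  also have "\<dots> \<le> real \<sigma> powr (?lam / 2)"
    using assms by (intro powr_mono) auto
  also have "\<dots> = (real \<sigma> powr ?lam) powr (1 / 2)" by (simp add: powr_powr)
  also have "\<dots> = sqrt (real n)" using assms by (simp add: powr_half_sqrt)
  also have "\<dots> \<le> 4 * real n / ?lam"
  proof -
    have "sqrt (real n) * ?lam \<le> sqrt (real n) * (4 * sqrt (real n))"
      using log_le_4_sqrt[of "real \<sigma>" "real n"] assms by (intro mult_left_mono) auto
    also have "\<dots> = 4 * real n" by simp
    finally show ?thesis using pos by (simp add: pos_le_divide_eq)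
  qed
  finally show ?thesis .
qed

lemma dag_size_shallow:
  assumes "2 \<le> \<sigma>" "2 \<le> leaves t" "log (real \<sigma>) (real (leaves t)) < 16"
  shows "real (dag_size t) \<le> 32 * real (leaves t) / log (real \<sigma>) (real (leaves t))"
proof -
  let ?n = "real (leaves t)" and ?lam = "log (real \<sigma>) (real (leaves t))"
  have "0 < ?lam" using assms by simp
  have "real (dag_size t) \<le> 2 * ?n"
    using card_subtrees_le[of t] unfolding dag_size_def by linarith
  also have "\<dots> \<le> 32 * ?n / ?lam"
  proof -
    have "2 * ?n * ?lam \<le> 2 * ?n * 16" using assms(3) by (intro mult_left_mono) auto
    then show ?thesis using \<open>0 < ?lam\<close> by (simp add: pos_le_divide_eq)
  qed
  finally show ?thesis .
qed

lemma dag_size_deep: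
  assumes "0 < \<beta>" "\<beta> < 1" "tree_balanced \<beta> t" "card (labels t) \<le> \<sigma>" "2 \<le> \<sigma>"
    and "2 \<le> leaves t" "16 \<le> log (real \<sigma>) (real (leaves t))"
  shows "real (dag_size t) \<le> 196 * balance_factor \<beta> * real (leaves t) / log (real \<sigma>) (real (leaves t))"
proof -
  let ?n = "real (leaves t)" and ?lam = "log (real \<sigma>) (real (leaves t))" and ?L = "balance_factor \<beta>"
  define k where "k = nat \<lfloor>?lam / 8\<rfloor>"
  have k_floor: "real k = of_int \<lfloor>?lam / 8\<rfloor>" unfolding k_def using assms(7) by simp
  have k_upper: "8 * real k \<le> ?lam" using k_floor of_int_floor_le[of "?lam / 8"] by linarith
  have k_lower: "?lam / 16 \<le> real k"
    using k_floor real_of_int_floor_add_one_gt[of "?lam / 8"] assms(7) by linarith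
  have k_pos: "1 \<le> k" using k_lower assms(7) by simp
  have "?lam \<le> 4 * sqrt ?n" using log_le_4_sqrt assms by simp
  moreover have "sqrt ?n \<le> ?n"
  proof -
    have "sqrt ?n * 1 \<le> sqrt ?n * sqrt ?n" using assms(6) by (intro mult_left_mono) auto
    then show ?thesis by simp
  qed
  ultimately have k_le_n: "k \<le> leaves t" using k_upper by simp
  have L: "1 \<le> ?L" using balance_factor_ge_1 assms(1,2) .
  have "real (dag_size t) \<le> real \<sigma> ^ (4 * k) + 12 * ?L * ?n / real k"
    using dag_size_threshold[OF assms(1-5) k_pos k_le_n] .
  also have "\<dots> \<le> 4 * ?L * ?n / ?lam + 192 * ?L * ?n / ?lam"
  proof (rule add_mono)
    have "real \<sigma> ^ (4 * k) \<le> 4 * ?n / ?lam"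
      using power_le_linear_over_log assms k_upper by simp
    also have "\<dots> \<le> 4 * ?L * ?n / ?lam"
      using L assms(7) by (intro divide_right_mono mult_right_mono) auto
    finally show "real \<sigma> ^ (4 * k) \<le> 4 * ?L * ?n / ?lam" .
    have "12 * ?L * ?n / real k \<le> 12 * ?L * ?n / (?lam / 16)"
      using k_lower L assms(7) by (intro divide_left_mono) auto
    then show "12 * ?L * ?n / real k \<le> 192 * ?L * ?n / ?lam" by simp
  qed
  also have "\<dots> = 196 * ?L * ?n / ?lam" by (simp add: field_simps)
  finally show ?thesis .
qed

lemma dag_size_bound:
  assumes "0 < \<beta>" "\<beta> < 1" "tree_balanced \<beta> t" "2 \<le> leaves t" "2 \<le> \<sigma>"
    and "card (labels t) \<le> \<sigma>"
  shows "real (dag_size t) \<le> 200 * balance_factor \<beta> * real (leaves t) / log (real \<sigma>) (real (leaves t))"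
proof -
  let ?n = "real (leaves t)" and ?lam = "log (real \<sigma>) (real (leaves t))" and ?L = "balance_factor \<beta>"
  have "0 < ?lam" using assms by simp
  have L: "1 \<le> ?L" using balance_factor_ge_1 assms(1,2) .
  show ?thesis
  proof (cases "?lam < 16")
    case True
    have "32 * ?n \<le> 200 * ?L * ?n" using L by (intro mult_right_mono) auto
    then have "32 * ?n / ?lam \<le> 200 * ?L * ?n / ?lam"
      using \<open>0 < ?lam\<close> by (intro divide_right_mono) auto
    then show ?thesis using dag_size_shallow[OF assms(5,4) True] by linarith
  next
    case False
    have "196 * ?L * ?n \<le> 200 * ?L * ?n" using L by (intro mult_right_mono) auto
    then have "196 * ?L * ?n / ?lam \<le> 200 * ?L * ?n / ?lam"
      using \<open>0 < ?lam\<close> by (intro divide_right_mono) auto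
    then show ?thesis using dag_size_deep[OF assms(1-3,6,5,4)] False by linarith
  qed
qed

theorem mainTheorem6:
  shows "\<exists>c0::real. c0 > 0 \<and>
    (\<forall>\<beta>::real. 0 < \<beta> \<and> \<beta> < 1 \<longrightarrow>
      (\<forall>(t :: nat fbtree) (n :: nat) (\<sigma> :: nat).
         tree_balanced \<beta> t \<and> leaves t = n \<and> n \<ge> 2 \<and>
         \<sigma> \<ge> 2 \<and> card (labels t) \<le> \<sigma> \<longrightarrow>
         real (dag_size t) \<le>
           c0 * (1 + log (1 + \<beta>) (1 / \<beta>)) * real n / log (real \<sigma>) (real n)))"
  using dag_size_bound unfolding balance_factor_def by (intro exI[of _ 200]) auto

end
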